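(* For every $\mathbf{h},\mathbf{k}\in\mathbb{N}^n$, letting $t:=|\mathbf{h}+\mathbf{k}|=\deg(\mathbf{x}^{\mathbf{h}}(1-\mathbf{x})^{\mathbf{k}})$, one has $1-\mathbf{x}^{\mathbf{h}}(1-\mathbf{x})^{\mathbf{k}}+C'_t\in M_{2\lceil t/2\rceil}(g_1,\dots,g_n)$, where $g_i:=x_i(1-x_i)$.
   Context: $\mathbf{x}=(x_1,\dots,x_n)$, $\mathbf{x}^{\mathbf{h}}(1-\mathbf{x})^{\mathbf{k}}:=\prod_{i=1}^n x_i^{h_i}(1-x_i)^{k_i}$, $|\mathbf{a}|=\sum_i a_i$. $\Sigma[\mathbf{x}]$ denotes sums of squares of real polynomials; the $r$-truncated quadratic module is $M_r(g_1,\dots,g_n):=\{\sigma_0+\sum_{i=1}^n\sigma_i g_i:\ \sigma_i\in\Sigma[\mathbf{x}],\ \deg\sigma_0\le r,\ \deg(\sigma_i g_i)\le r\}$. For each positive integer $j$, $C_j\le 1$ denotes a constant such that $\prod_{i=1}^j x_i+C_j\in M_{2\lceil j/2\rceil}(g_1,\dots,g_j)$ (in the $j$ variables $x_1,\dots,x_j$), with $C_1:=0$; such constants exist. Then $C'_t:=\sum_{j=1}^t C_j$. *)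

theory Defs
  imports Complex_Main "HOL-Library.Poly_Mapping"
begin

text \<open>Real multivariate polynomials in variables x_i (i :: nat), represented as
  finitely supported maps from monomials (exponent vectors) to real coefficients.\<close>

type_synonym mpoly = "(nat \<Rightarrow>\<^sub>0 nat) \<Rightarrow>\<^sub>0 real"

definition Var :: "nat \<Rightarrow> mpoly" where
  "Var i = Poly_Mapping.single (Poly_Mapping.single i 1) 1"

definition Const :: "real \<Rightarrow> mpoly" where
  "Const c = Poly_Mapping.single 0 c"

text \<open>Total degree of a monomial and of a polynomial (degree of 0 is 0).\<close>
definition mdeg :: "(nat \<Rightarrow>\<^sub>0 nat) \<Rightarrow> nat" where
  "mdeg m = (\<Sum>i\<in>Poly_Mapping.keys m. Poly_Mapping.lookup m i)"

definition tdeg :: "mpoly \<Rightarrow> nat" where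
  "tdeg p = Max (insert 0 (mdeg ` Poly_Mapping.keys p))"

definition vars :: "mpoly \<Rightarrow> nat set" where
  "vars p = \<Union> (Poly_Mapping.keys ` Poly_Mapping.keys p)"

definition sos :: "nat set \<Rightarrow> mpoly set" where
  "sos V = {p. \<exists>qs. p = sum_list (map (\<lambda>q. q * q) qs) \<and> (\<forall>q\<in>set qs. vars q \<subseteq> V)}"

definition qmod :: "nat set \<Rightarrow> (nat \<Rightarrow> mpoly) \<Rightarrow> nat \<Rightarrow> mpoly set" where
  "qmod I g r = {p. \<exists>\<sigma>0 \<sigma>. \<sigma>0 \<in> sos I \<and> (\<forall>i\<in>I. \<sigma> i \<in> sos I)
      \<and> tdeg \<sigma>0 \<le> r \<and> (\<forall>i\<in>I. tdeg (\<sigma> i * g i) \<le> r)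
      \<and> p = \<sigma>0 + (\<Sum>i\<in>I. \<sigma> i * g i)}"

definition gbox :: "nat \<Rightarrow> mpoly" where
  "gbox i = Var i * (1 - Var i)"

end

theory Submission
  imports Defs
begin

text \<open>Write \<open>x\<^sup>h(1 - x)\<^sup>k\<close> as a product \<open>l\<^sub>1 \<cdots> l\<^sub>t\<close> of literals \<open>l \<in> {x\<^sub>i, 1 - x\<^sub>i}\<close> and telescope:
  \<open>1 - l\<^sub>1 \<cdots> l\<^sub>t = \<Sum>\<^sub>j (1 - l\<^sub>j) l\<^sub>j\<^sub>+\<^sub>1 \<cdots> l\<^sub>t\<close>, where the \<open>j\<close>-th summand is itself a product of
  \<open>t - j + 1\<close> literals. Substituting \<open>m\<close> literals for \<open>x\<^sub>1, \<dots>, x\<^sub>m\<close> in a certificate for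
  \<open>x\<^sub>1 \<cdots> x\<^sub>m + C\<^sub>m\<close> yields a certificate of the same degree for their product plus \<open>C\<^sub>m\<close>:
  the substitution is affine, preserves sums of squares, and sends the generator of a variable
  replaced by \<open>l\<close> to \<open>l(1 - l) = x\<^sub>i(1 - x\<^sub>i) = g\<^sub>i\<close>. Adding these \<open>t\<close> certificates, whose constants
  sum to \<open>C'\<^sub>t\<close>, gives the claim.\<close>

lemma Const_add: "Const (a + b) = Const a + Const b"
  by (simp add: Const_def single_add)

lemma Const_mult: "Const a * Const b = Const (a * b)"
  by (simp add: Const_def mult_single)

lemma Const_0 [simp]: "Const 0 = 0"
  by (simp add: Const_def)

lemma Const_1 [simp]: "Const 1 = 1"
  by (simp add: Const_def)

lemma poly_mapping_sum_single:
  "p = (\<Sum>m\<in>Poly_Mapping.keys p. Poly_Mapping.single m (Poly_Mapping.lookup p m))"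
proof (rule poly_mapping_eqI)
  fix k
  show "Poly_Mapping.lookup p k =
      Poly_Mapping.lookup (\<Sum>m\<in>Poly_Mapping.keys p. Poly_Mapping.single m (Poly_Mapping.lookup p m)) k"
    by (cases "k \<in> Poly_Mapping.keys p") (auto simp: lookup_sum lookup_single when_def in_keys_iff)
qed

subsection \<open>Total degree\<close>

lemma mdeg_eq_sum:
  "finite S \<Longrightarrow> Poly_Mapping.keys m \<subseteq> S \<Longrightarrow> mdeg m = (\<Sum>i\<in>S. Poly_Mapping.lookup m i)"
  unfolding mdeg_def by (rule sum.mono_neutral_left) (auto simp: in_keys_iff)

lemma mdeg_add: "mdeg (a + b) = mdeg a + mdeg b"
proof -
  let ?S = "Poly_Mapping.keys a \<union> Poly_Mapping.keys b"
  have "mdeg (a + b) = (\<Sum>i\<in>?S. Poly_Mapping.lookup (a + b) i)"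
    by (rule mdeg_eq_sum) (auto dest: keys_add[THEN subsetD])
  also have "\<dots> = (\<Sum>i\<in>?S. Poly_Mapping.lookup a i) + (\<Sum>i\<in>?S. Poly_Mapping.lookup b i)"
    by (simp add: lookup_add sum.distrib)
  also have "\<dots> = mdeg a + mdeg b"
    using mdeg_eq_sum[of ?S a] mdeg_eq_sum[of ?S b] by simp
  finally show ?thesis .
qed

lemma tdeg_le_iff: "tdeg p \<le> r \<longleftrightarrow> (\<forall>m\<in>Poly_Mapping.keys p. mdeg m \<le> r)"
  unfolding tdeg_def by auto

lemma tdeg_Const [simp]: "tdeg (Const c) = 0"
  by (simp add: tdeg_def Const_def mdeg_def)

lemma tdeg_0 [simp]: "tdeg 0 = 0"
  using tdeg_Const[of 0] by simp

lemma tdeg_1 [simp]: "tdeg 1 = 0"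
  using tdeg_Const[of 1] by simp

lemma tdeg_Var_le: "tdeg (Var i) \<le> 1"
  by (simp add: tdeg_le_iff Var_def mdeg_def)

lemma tdeg_add_le: "tdeg p \<le> r \<Longrightarrow> tdeg q \<le> r \<Longrightarrow> tdeg (p + q) \<le> r"
  unfolding tdeg_le_iff using keys_add[of p q] by blast

lemma tdeg_diff_le: "tdeg p \<le> r \<Longrightarrow> tdeg q \<le> r \<Longrightarrow> tdeg (p - q) \<le> r"
  unfolding tdeg_le_iff using keys_diff[of p q] by blast

lemma tdeg_sum_le: "(\<And>i. i \<in> S \<Longrightarrow> tdeg (F i) \<le> r) \<Longrightarrow> tdeg (sum F S) \<le> r"
  by (induction S rule: infinite_finite_induct) (auto intro: tdeg_add_le)

lemma tdeg_mult_le: "tdeg (p * q) \<le> tdeg p + tdeg q"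
  unfolding tdeg_le_iff
proof
  fix m assume "m \<in> Poly_Mapping.keys (p * q)"
  then obtain a b where "m = a + b" "a \<in> Poly_Mapping.keys p" "b \<in> Poly_Mapping.keys q"
    using keys_mult[of p q] by blast
  then show "mdeg m \<le> tdeg p + tdeg q"
    using tdeg_le_iff[of p "tdeg p"] tdeg_le_iff[of q "tdeg q"] by (auto simp: mdeg_add intro: add_mono)
qed

lemma tdeg_prod_le: "tdeg (prod F S) \<le> (\<Sum>i\<in>S. tdeg (F i))"
proof (induction S rule: infinite_finite_induct)
  case (insert i S)
  then show ?case using tdeg_mult_le[of "F i" "prod F S"] by simp
qed simp_all

lemma tdeg_power_le: "tdeg (p ^ k) \<le> k * tdeg p"
proof (induction k)
  case (Suc k)
  then show ?case using tdeg_mult_le[of p "p ^ k"] by simp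
qed simp

lemma vars_Const [simp]: "vars (Const c) = {}"
  by (simp add: vars_def Const_def)

lemma vars_0 [simp]: "vars 0 = {}"
  using vars_Const[of 0] by simp

lemma vars_1 [simp]: "vars 1 = {}"
  using vars_Const[of 1] by simp

lemma vars_Var [simp]: "vars (Var i) = {i}"
  by (simp add: vars_def Var_def)

lemma vars_add: "vars (p + q) \<subseteq> vars p \<union> vars q"
  unfolding vars_def using keys_add[of p q] by blast

lemma vars_diff: "vars (p - q) \<subseteq> vars p \<union> vars q"
  unfolding vars_def using keys_diff[of p q] by blast

lemma vars_mult: "vars (p * q) \<subseteq> vars p \<union> vars q"
proof
  fix x assume "x \<in> vars (p * q)"
  then obtain m where x: "x \<in> Poly_Mapping.keys m" and m: "m \<in> Poly_Mapping.keys (p * q)"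
    by (auto simp: vars_def)
  obtain a b where "m = a + b" "a \<in> Poly_Mapping.keys p" "b \<in> Poly_Mapping.keys q"
    using m keys_mult[of p q] by blast
  then show "x \<in> vars p \<union> vars q"
    using x keys_add[of a b] by (auto simp: vars_def)
qed

lemma vars_sum: "vars (sum F S) \<subseteq> (\<Union>i\<in>S. vars (F i))"
  by (induction S rule: infinite_finite_induct) (use vars_add in fastforce)+

lemma vars_prod: "vars (prod F S) \<subseteq> (\<Union>i\<in>S. vars (F i))"
  by (induction S rule: infinite_finite_induct) (use vars_mult in fastforce)+

lemma vars_power: "vars (p ^ k) \<subseteq> vars p"
  by (induction k) (use vars_mult in fastforce)+

subsection \<open>Substitution\<close>

definition monom_subst :: "(nat \<Rightarrow> mpoly) \<Rightarrow> (nat \<Rightarrow>\<^sub>0 nat) \<Rightarrow> mpoly" where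
  "monom_subst f m = (\<Prod>i\<in>Poly_Mapping.keys m. f i ^ Poly_Mapping.lookup m i)"

definition mpoly_subst :: "(nat \<Rightarrow> mpoly) \<Rightarrow> mpoly \<Rightarrow> mpoly" where
  "mpoly_subst f p = (\<Sum>m\<in>Poly_Mapping.keys p. Const (Poly_Mapping.lookup p m) * monom_subst f m)"

lemma monom_subst_eq_prod:
  "finite S \<Longrightarrow> Poly_Mapping.keys m \<subseteq> S \<Longrightarrow>
    monom_subst f m = (\<Prod>i\<in>S. f i ^ Poly_Mapping.lookup m i)"
  unfolding monom_subst_def by (rule prod.mono_neutral_left) (auto simp: in_keys_iff)

lemma monom_subst_add: "monom_subst f (a + b) = monom_subst f a * monom_subst f b"
proof -
  let ?S = "Poly_Mapping.keys a \<union> Poly_Mapping.keys b"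
  have "monom_subst f (a + b) = (\<Prod>i\<in>?S. f i ^ Poly_Mapping.lookup (a + b) i)"
    by (rule monom_subst_eq_prod) (auto dest: keys_add[THEN subsetD])
  also have "\<dots> = (\<Prod>i\<in>?S. f i ^ Poly_Mapping.lookup a i) * (\<Prod>i\<in>?S. f i ^ Poly_Mapping.lookup b i)"
    by (simp add: lookup_add power_add prod.distrib)
  also have "\<dots> = monom_subst f a * monom_subst f b"
    using monom_subst_eq_prod[of ?S a f] monom_subst_eq_prod[of ?S b f] by simp
  finally show ?thesis .
qed

lemma mpoly_subst_single: "mpoly_subst f (Poly_Mapping.single m c) = Const c * monom_subst f m"
  by (simp add: mpoly_subst_def)

lemma mpoly_subst_Const [simp]: "mpoly_subst f (Const c) = Const c"
  by (simp add: Const_def mpoly_subst_single monom_subst_def)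

lemma mpoly_subst_0 [simp]: "mpoly_subst f 0 = 0"
  using mpoly_subst_Const[of f 0] by simp

lemma mpoly_subst_1 [simp]: "mpoly_subst f 1 = 1"
  using mpoly_subst_Const[of f 1] by simp

lemma mpoly_subst_Var [simp]: "mpoly_subst f (Var i) = f i"
  by (simp add: Var_def mpoly_subst_single monom_subst_def)

lemma mpoly_subst_add: "mpoly_subst f (p + q) = mpoly_subst f p + mpoly_subst f q"
  unfolding mpoly_subst_def
  by (rule setsum_keys_plus_distrib) (auto simp: Const_add distrib_right)

lemma mpoly_subst_sum: "mpoly_subst f (sum F S) = (\<Sum>i\<in>S. mpoly_subst f (F i))"
  by (induction S rule: infinite_finite_induct) (auto simp: mpoly_subst_add)

lemma mpoly_subst_diff: "mpoly_subst f (p - q) = mpoly_subst f p - mpoly_subst f q"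
  using mpoly_subst_add[of f "p - q" q] by simp

lemma mpoly_subst_mult: "mpoly_subst f (p * q) = mpoly_subst f p * mpoly_subst f q"
proof -
  let ?P = "Poly_Mapping.keys p" and ?Q = "Poly_Mapping.keys q"
  let ?p = "Poly_Mapping.lookup p" and ?q = "Poly_Mapping.lookup q"
  have "p * q = (\<Sum>a\<in>?P. Poly_Mapping.single a (?p a)) * (\<Sum>b\<in>?Q. Poly_Mapping.single b (?q b))"
    using poly_mapping_sum_single[of p] poly_mapping_sum_single[of q] by simp
  also have "\<dots> = (\<Sum>a\<in>?P. \<Sum>b\<in>?Q. Poly_Mapping.single (a + b) (?p a * ?q b))"
    by (simp add: sum_product mult_single)
  finally have "mpoly_subst f (p * q) = (\<Sum>a\<in>?P. \<Sum>b\<in>?Q. Const (?p a * ?q b) * monom_subst f (a + b))"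
    by (simp add: mpoly_subst_sum mpoly_subst_single)
  also have "\<dots> = (\<Sum>a\<in>?P. \<Sum>b\<in>?Q. (Const (?p a) * monom_subst f a) * (Const (?q b) * monom_subst f b))"
    by (simp add: monom_subst_add Const_mult[symmetric] ac_simps)
  also have "\<dots> = mpoly_subst f p * mpoly_subst f q"
    by (simp add: mpoly_subst_def sum_product)
  finally show ?thesis .
qed

lemma mpoly_subst_prod: "mpoly_subst f (prod F S) = (\<Prod>i\<in>S. mpoly_subst f (F i))"
  by (induction S rule: infinite_finite_induct) (auto simp: mpoly_subst_mult)

lemma tdeg_monom_subst_le:
  assumes "\<And>i. tdeg (f i) \<le> 1"
  shows "tdeg (monom_subst f m) \<le> mdeg m"
proof -
  have "tdeg (monom_subst f m) \<le> (\<Sum>i\<in>Poly_Mapping.keys m. tdeg (f i ^ Poly_Mapping.lookup m i))"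
    unfolding monom_subst_def by (rule tdeg_prod_le)
  also have "\<dots> \<le> (\<Sum>i\<in>Poly_Mapping.keys m. Poly_Mapping.lookup m i)"
    by (intro sum_mono order_trans[OF tdeg_power_le] mult_le_mono2[OF assms, THEN order_trans]) simp
  finally show ?thesis by (simp add: mdeg_def)
qed

lemma tdeg_mpoly_subst_le:
  assumes "\<And>i. tdeg (f i) \<le> 1"
  shows "tdeg (mpoly_subst f p) \<le> tdeg p"
  unfolding mpoly_subst_def
proof (rule tdeg_sum_le)
  fix m assume "m \<in> Poly_Mapping.keys p"
  then have "mdeg m \<le> tdeg p"
    using tdeg_le_iff by blast
  moreover have "tdeg (monom_subst f m) \<le> mdeg m"
    using assms by (rule tdeg_monom_subst_le)
  ultimately show "tdeg (Const (Poly_Mapping.lookup p m) * monom_subst f m) \<le> tdeg p"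
    using tdeg_mult_le[of "Const (Poly_Mapping.lookup p m)" "monom_subst f m"] by simp
qed

lemma vars_mpoly_subst: "vars (mpoly_subst f p) \<subseteq> (\<Union>i. vars (f i))"
proof -
  have "vars (monom_subst f m) \<subseteq> (\<Union>i. vars (f i))" for m
  proof -
    have "vars (monom_subst f m) \<subseteq> (\<Union>i\<in>Poly_Mapping.keys m. vars (f i ^ Poly_Mapping.lookup m i))"
      unfolding monom_subst_def by (rule vars_prod)
    also have "\<dots> \<subseteq> (\<Union>i. vars (f i))"
      using vars_power by blast
    finally show ?thesis .
  qed
  then have monomial: "vars (Const c * monom_subst f m) \<subseteq> (\<Union>i. vars (f i))" for c m
    using vars_mult[of "Const c" "monom_subst f m"] by (simp add: subset_trans)
  have "vars (mpoly_subst f p)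
      \<subseteq> (\<Union>m\<in>Poly_Mapping.keys p. vars (Const (Poly_Mapping.lookup p m) * monom_subst f m))"
    unfolding mpoly_subst_def by (rule vars_sum)
  also have "\<dots> \<subseteq> (\<Union>i. vars (f i))"
    by (intro UN_least monomial)
  finally show ?thesis .
qed

subsection \<open>Sums of squares and the truncated quadratic module\<close>

lemma sos_0: "0 \<in> sos V"
  unfolding sos_def by (rule CollectI, rule exI[of _ "[]"]) simp

lemma sos_add: "p \<in> sos V \<Longrightarrow> q \<in> sos V \<Longrightarrow> p + q \<in> sos V"
  unfolding sos_def by (auto, metis (no_types, lifting) Un_iff map_append set_append sum_list_append)

lemma sos_sum: "(\<And>i. i \<in> S \<Longrightarrow> F i \<in> sos V) \<Longrightarrow> sum F S \<in> sos V"
  by (induction S rule: infinite_finite_induct) (auto intro: sos_add sos_0)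

lemma mpoly_subst_sos:
  assumes "p \<in> sos V" and "\<And>i. vars (f i) \<subseteq> W"
  shows "mpoly_subst f p \<in> sos W"
proof -
  obtain qs where p: "p = sum_list (map (\<lambda>q. q * q) qs)"
    using assms(1) by (auto simp: sos_def)
  have "mpoly_subst f p = sum_list (map (\<lambda>q. q * q) (map (mpoly_subst f) qs))"
    unfolding p by (induction qs) (auto simp: mpoly_subst_add mpoly_subst_mult)
  moreover have "vars (mpoly_subst f q) \<subseteq> W" for q
    using vars_mpoly_subst[of f q] assms(2) by blast
  ultimately show ?thesis
    unfolding sos_def by (intro CollectI exI[of _ "map (mpoly_subst f) qs"]) auto
qed

lemma zero_in_qmod: "0 \<in> qmod I g r"
  unfolding qmod_def
  by (rule CollectI, rule exI[of _ 0], rule exI[of _ "\<lambda>_. 0"]) (simp add: sos_0)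

lemma qmod_mono:
  assumes "p \<in> qmod I g r" "r \<le> s"
  shows "p \<in> qmod I g s"
proof -
  obtain s0 \<sigma> where "s0 \<in> sos I" "\<forall>i\<in>I. \<sigma> i \<in> sos I" "tdeg s0 \<le> r"
      "\<forall>i\<in>I. tdeg (\<sigma> i * g i) \<le> r" "p = s0 + (\<Sum>i\<in>I. \<sigma> i * g i)"
    using assms(1) unfolding qmod_def by blast
  with assms(2) show ?thesis
    unfolding qmod_def by (intro CollectI exI[of _ s0] exI[of _ \<sigma>]) auto
qed

lemma qmod_add:
  assumes "p \<in> qmod I g r" "q \<in> qmod I g r"
  shows "p + q \<in> qmod I g r"
proof -
  obtain s0 s where s: "s0 \<in> sos I" "\<forall>i\<in>I. s i \<in> sos I" "tdeg s0 \<le> r"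
      "\<forall>i\<in>I. tdeg (s i * g i) \<le> r" "p = s0 + (\<Sum>i\<in>I. s i * g i)"
    using assms(1) unfolding qmod_def by blast
  obtain t0 t where t: "t0 \<in> sos I" "\<forall>i\<in>I. t i \<in> sos I" "tdeg t0 \<le> r"
      "\<forall>i\<in>I. tdeg (t i * g i) \<le> r" "q = t0 + (\<Sum>i\<in>I. t i * g i)"
    using assms(2) unfolding qmod_def by blast
  have "p + q = (s0 + t0) + (\<Sum>i\<in>I. (s i + t i) * g i)"
    unfolding s(5) t(5) by (simp add: distrib_right sum.distrib add_ac)
  moreover have "\<forall>i\<in>I. tdeg ((s i + t i) * g i) \<le> r"
    using s(4) t(4) by (simp add: distrib_right tdeg_add_le)
  ultimately show ?thesis
    using s t unfolding qmod_def
    by (intro CollectI exI[of _ "s0 + t0"] exI[of _ "\<lambda>i. s i + t i"]) (simp add: sos_add tdeg_add_le)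
qed

lemma mpoly_subst_in_qmod:
  assumes p: "p \<in> qmod J g r" and "finite J" "finite I"
    and deg: "\<And>i. tdeg (f i) \<le> 1" and vars: "\<And>i. vars (f i) \<subseteq> I"
    and \<pi>: "\<And>i. i \<in> J \<Longrightarrow> \<pi> i \<in> I" "\<And>i. i \<in> J \<Longrightarrow> mpoly_subst f (g i) = g' (\<pi> i)"
  shows "mpoly_subst f p \<in> qmod I g' r"
proof -
  obtain s0 s where s: "s0 \<in> sos J" "\<forall>i\<in>J. s i \<in> sos J" "tdeg s0 \<le> r"
      "\<forall>i\<in>J. tdeg (s i * g i) \<le> r" "p = s0 + (\<Sum>i\<in>J. s i * g i)"
    using p unfolding qmod_def by blast
  have subst_deg: "tdeg (mpoly_subst f q) \<le> tdeg q" for q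
    using deg by (rule tdeg_mpoly_subst_le)
  \<comment> \<open>merge the multipliers of all generators with the same image under \<open>\<pi>\<close>\<close>
  define t where "t l = (\<Sum>i | i \<in> J \<and> \<pi> i = l. mpoly_subst f (s i))" for l
  have "mpoly_subst f p = mpoly_subst f s0 + (\<Sum>i\<in>J. mpoly_subst f (s i) * g' (\<pi> i))"
    using s(5) \<pi>(2) by (simp add: mpoly_subst_add mpoly_subst_sum mpoly_subst_mult)
  also have "(\<Sum>i\<in>J. mpoly_subst f (s i) * g' (\<pi> i))
      = (\<Sum>l\<in>I. \<Sum>i | i \<in> J \<and> \<pi> i = l. mpoly_subst f (s i) * g' (\<pi> i))"
    by (rule sum.group[symmetric]) (use assms in auto)
  also have "\<dots> = (\<Sum>l\<in>I. t l * g' l)"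
    unfolding t_def by (rule sum.cong) (auto simp: sum_distrib_right)
  finally have eq: "mpoly_subst f p = mpoly_subst f s0 + (\<Sum>l\<in>I. t l * g' l)" .
  have "mpoly_subst f s0 \<in> sos I" "\<forall>l\<in>I. t l \<in> sos I"
    using s(1,2) vars unfolding t_def by (auto intro!: sos_sum mpoly_subst_sos)
  moreover have "tdeg (mpoly_subst f s0) \<le> r"
    using subst_deg s(3) by (rule order_trans)
  moreover have "tdeg (t l * g' l) \<le> r" for l
  proof -
    have "t l * g' l = (\<Sum>i | i \<in> J \<and> \<pi> i = l. mpoly_subst f (s i * g i))"
      unfolding t_def using \<pi>(2) by (simp add: sum_distrib_right mpoly_subst_mult)
    also have "tdeg \<dots> \<le> r"
      using s(4) by (intro tdeg_sum_le order_trans[OF subst_deg]) simp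
    finally show ?thesis .
  qed
  ultimately show ?thesis
    unfolding qmod_def using eq by (intro CollectI exI[of _ "mpoly_subst f s0"] exI[of _ t]) simp
qed

subsection \<open>Products of literals\<close>

definition literals :: "nat set \<Rightarrow> mpoly set" where
  "literals I = (\<Union>i\<in>I. {Var i, 1 - Var i})"

lemma one_minus_literal: "l \<in> literals I \<Longrightarrow> 1 - l \<in> literals I"
  by (auto simp: literals_def)

lemma tdeg_literal_le: "l \<in> literals I \<Longrightarrow> tdeg l \<le> 1"
  using tdeg_Var_le tdeg_diff_le[OF _ tdeg_Var_le] by (auto simp: literals_def)

lemma vars_literal: "l \<in> literals I \<Longrightarrow> vars l \<subseteq> I"
  by (auto simp: literals_def dest: vars_diff[THEN subsetD])

lemma literal_times_one_minus:
  assumes "l \<in> literals I"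
  shows "\<exists>i\<in>I. l * (1 - l) = gbox i"
proof -
  obtain i where "i \<in> I" "l = Var i \<or> l = 1 - Var i"
    using assms by (auto simp: literals_def)
  moreover have "Var i * (1 - Var i) = gbox i" "(1 - Var i) * (1 - (1 - Var i)) = gbox i"
    by (simp_all add: gbox_def mult.commute)
  ultimately show ?thesis
    by auto
qed

lemma mpoly_subst_gbox: "mpoly_subst f (gbox i) = f i * (1 - f i)"
  by (simp add: gbox_def mpoly_subst_mult mpoly_subst_diff)

lemma prod_literals_in_qmod:
  assumes hyp: "(\<Prod>i\<in>{1..length ls}. Var i) + Const c \<in> qmod {1..length ls} gbox r"
    and ls: "set ls \<subseteq> literals I" and "finite I"
  shows "prod_list ls + Const c \<in> qmod I gbox r"
proof -
  define f where "f i = (if i \<in> {1..length ls} then ls ! (i - 1) else 0)" for i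
  have f_literal: "f i \<in> literals I" if "i \<in> {1..length ls}" for i
    using that ls by (auto simp: f_def)
  then have "\<forall>i\<in>{1..length ls}. \<exists>j\<in>I. f i * (1 - f i) = gbox j"
    using literal_times_one_minus by blast
  then obtain \<pi> where \<pi>: "\<forall>i\<in>{1..length ls}. \<pi> i \<in> I \<and> f i * (1 - f i) = gbox (\<pi> i)"
    by (metis bchoice)
  have "mpoly_subst f ((\<Prod>i\<in>{1..length ls}. Var i) + Const c) \<in> qmod I gbox r"
  proof (rule mpoly_subst_in_qmod[OF hyp])
    show "tdeg (f i) \<le> 1" for i
      using f_literal tdeg_literal_le by (cases "i \<in> {1..length ls}") (auto simp: f_def)
    show "vars (f i) \<subseteq> I" for i
      using f_literal vars_literal by (cases "i \<in> {1..length ls}") (auto simp: f_def)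
    show "\<pi> i \<in> I" "mpoly_subst f (gbox i) = gbox (\<pi> i)" if "i \<in> {1..length ls}" for i
      using \<pi> that by (simp_all add: mpoly_subst_gbox)
  qed (simp_all add: \<open>finite I\<close>)
  moreover have "(\<Prod>i\<in>{1..length ls}. f i) = prod_list ls"
    unfolding prod.list_conv_set_nth
    by (rule prod.reindex_bij_witness[where i = Suc and j = "\<lambda>i. i - 1"]) (auto simp: f_def)
  ultimately show ?thesis
    by (simp add: mpoly_subst_add mpoly_subst_prod)
qed

lemma one_minus_prod_literals_in_qmod:
  fixes C :: "nat \<Rightarrow> real" and r :: "nat \<Rightarrow> nat"
  assumes C: "\<And>j. j \<ge> 1 \<Longrightarrow> (\<Prod>i\<in>{1..j}. Var i) + Const (C j) \<in> qmod {1..j} gbox (r j)"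
    and "mono r" and "finite I"
  shows "set ls \<subseteq> literals I \<Longrightarrow>
    1 - prod_list ls + Const (\<Sum>j\<in>{1..length ls}. C j) \<in> qmod I gbox (r (length ls))"
proof (induction ls)
  case Nil
  then show ?case by (simp add: zero_in_qmod)
next
  case (Cons l ls)
  let ?L = "length ls"
  have "r ?L \<le> r (Suc ?L)"
    using \<open>mono r\<close> by (simp add: monoD)
  then have "1 - prod_list ls + Const (\<Sum>j\<in>{1..?L}. C j) \<in> qmod I gbox (r (Suc ?L))"
    using Cons by (intro qmod_mono[OF Cons.IH]) simp_all
  moreover have "prod_list ((1 - l) # ls) + Const (C (Suc ?L)) \<in> qmod I gbox (r (Suc ?L))"
    using Cons.prems C[of "Suc ?L"] \<open>finite I\<close>
    by (intro prod_literals_in_qmod) (auto intro: one_minus_literal)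
  moreover have "1 - prod_list (l # ls) + Const (\<Sum>j\<in>{1..Suc ?L}. C j)
      = (1 - prod_list ls + Const (\<Sum>j\<in>{1..?L}. C j)) + (prod_list ((1 - l) # ls) + Const (C (Suc ?L)))"
    by (simp add: Const_add algebra_simps)
  ultimately show ?case
    by (simp only: length_Cons qmod_add)
qed

lemma mono_twice_half_ceiling: "mono (\<lambda>j::nat. 2 * nat \<lceil>real j / 2\<rceil>)"
  by (intro monoI mult_le_mono2 nat_mono ceiling_mono) simp

lemma prod_list_concat: "prod_list (concat xss) = prod_list (map prod_list xss)"
  by (induction xss) simp_all

theorem lemma3:
  fixes n :: nat and h k :: "nat \<Rightarrow> nat" and C :: "nat \<Rightarrow> real"
  assumes C1: "C 1 = 0"
    and Cj: "\<forall>j\<ge>1. C j \<le> 1 \<and>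
      (\<Prod>i\<in>{1..j}. Var i) + Const (C j) \<in> qmod {1..j} gbox (2 * nat \<lceil>real j / 2\<rceil>)"
  shows "let t = (\<Sum>i\<in>{1..n}. h i + k i) in
    1 - (\<Prod>i\<in>{1..n}. Var i ^ h i * (1 - Var i) ^ k i) + Const (\<Sum>j\<in>{1..t}. C j)
      \<in> qmod {1..n} gbox (2 * nat \<lceil>real t / 2\<rceil>)"
proof -
  define ls where
    "ls = concat (map (\<lambda>i. replicate (h i) (Var i) @ replicate (k i) (1 - Var i)) [1..<Suc n])"
  have "set ls \<subseteq> literals {1..n}"
    by (auto simp: ls_def literals_def intro!: bexI)
  with Cj have "1 - prod_list ls + Const (\<Sum>j\<in>{1..length ls}. C j)
      \<in> qmod {1..n} gbox (2 * nat \<lceil>real (length ls) / 2\<rceil>)"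
    by (intro one_minus_prod_literals_in_qmod[OF _ mono_twice_half_ceiling]) simp_all
  moreover have "length ls = (\<Sum>i\<in>{1..n}. h i + k i)"
    by (simp add: ls_def length_concat o_def interv_sum_list_conv_sum_set_nat
        atLeastLessThanSuc_atLeastAtMost del: upt_Suc)
  moreover have "prod_list ls = (\<Prod>i\<in>{1..n}. Var i ^ h i * (1 - Var i) ^ k i)"
    by (simp add: ls_def prod_list_concat o_def prod.distinct_set_conv_list[symmetric]
        atLeastLessThanSuc_atLeastAtMost del: upt_Suc)
  ultimately show ?thesis
    by (simp only: Let_def)
qed

end
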